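(* Let $N$ be a complex two-step nilpotent Lie algebra whose center has dimension $p=2$, with $q=\dim N-2$, and suppose the marginal rank of $N$ equals $q$. Let $(X,I)$ be a basis of $N$ and let $A=\mathcal A_{\cdot\cdot 1}$, $B=\mathcal A_{\cdot\cdot 2}$ be the two slices of its representation tensor $\mathcal A=\mathcal A(X,I)$. If \[ \operatorname{rank}(c_{11}A+c_{12}B)+\operatorname{rank}(c_{21}A+c_{22}B)>q \] for every nonsingular matrix $C=(c_{ij})\in\mathbb C^{2\times 2}$, then $N$ is indecomposable.
   Context: A basis $(X,I)$ of $N$ consists of $I=\{\mathbf y_1,\mathbf y_2\}$, a basis of the center of $N$, and $X=\{\mathbf x_1,\dots,\mathbf x_q\}$ such that $X\cup I$ is a basis of $N$. Its representation tensor $\mathcal A(X,I)=(a_{ijk})\in\mathbb C^{q\times q\times 2}$ is defined by $a_{ijk}=\alpha_k$ where $[\mathbf x_i,\mathbf x_j]=\alpha_1\mathbf y_1+\alpha_2\mathbf y_2$; $\mathcal A_{\cdot\cdot k}=(a_{ijk})_{i,j}$. The marginal rank of $N$ is the rank of the $q\times 2q$ matrix $[\mathcal A_{\cdot\cdot 1},\mathcal A_{\cdot\cdot 2}]$ (independent of the basis). A Lie algebra is indecomposable if it is not a direct sum of two nonzero ideals. *)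

theory Defs
  imports "HOL-Analysis.Analysis"
begin

definition lie_algebra :: "(complex \<Rightarrow> 'a::ab_group_add \<Rightarrow> 'a) \<Rightarrow> ('a \<Rightarrow> 'a \<Rightarrow> 'a) \<Rightarrow> bool" where
  "lie_algebra sc br \<longleftrightarrow>
     vector_space sc \<and>
     (\<forall>x. Vector_Spaces.linear sc sc (br x)) \<and> (\<forall>y. Vector_Spaces.linear sc sc (\<lambda>x. br x y)) \<and>
     (\<forall>x. br x x = 0) \<and>
     (\<forall>x y z. br x (br y z) + br y (br z x) + br z (br x y) = 0)"

definition fin_dim_space :: "(complex \<Rightarrow> 'a::ab_group_add \<Rightarrow> 'a) \<Rightarrow> bool" where
  "fin_dim_space sc \<longleftrightarrow> (\<exists>S. finite S \<and> module.span sc S = UNIV)"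

definition lie_center :: "('a \<Rightarrow> 'a \<Rightarrow> 'a::ab_group_add) \<Rightarrow> 'a set" where
  "lie_center br = {z. \<forall>x. br z x = 0}"

definition two_step_nilpotent :: "('a \<Rightarrow> 'a \<Rightarrow> 'a::ab_group_add) \<Rightarrow> bool" where
  "two_step_nilpotent br \<longleftrightarrow> (\<forall>x y z. br (br x y) z = 0) \<and> (\<exists>x y. br x y \<noteq> 0)"

definition lie_ideal :: "(complex \<Rightarrow> 'a::ab_group_add \<Rightarrow> 'a) \<Rightarrow> ('a \<Rightarrow> 'a \<Rightarrow> 'a) \<Rightarrow> 'a set \<Rightarrow> bool" where
  "lie_ideal sc br J \<longleftrightarrow> module.subspace sc J \<and> (\<forall>x\<in>J. \<forall>y. br y x \<in> J)"

definition lie_indecomposable :: "(complex \<Rightarrow> 'a::ab_group_add \<Rightarrow> 'a) \<Rightarrow> ('a \<Rightarrow> 'a \<Rightarrow> 'a) \<Rightarrow> bool" where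
  "lie_indecomposable sc br \<longleftrightarrow>
     \<not> (\<exists>J K. lie_ideal sc br J \<and> lie_ideal sc br K \<and> J \<noteq> {0} \<and> K \<noteq> {0} \<and>
              J \<inter> K = {0} \<and> {j + k | j k. j \<in> J \<and> k \<in> K} = UNIV)"

definition adapted_basis ::
  "(complex \<Rightarrow> 'a::ab_group_add \<Rightarrow> 'a) \<Rightarrow> ('a \<Rightarrow> 'a \<Rightarrow> 'a) \<Rightarrow> ('n \<Rightarrow> 'a) \<Rightarrow> 'a \<Rightarrow> 'a \<Rightarrow> bool" where
  "adapted_basis sc br x y1 y2 \<longleftrightarrow>
     y1 \<noteq> y2 \<and> \<not> module.dependent sc {y1, y2} \<and> module.span sc {y1, y2} = lie_center br \<and>
     inj x \<and> range x \<inter> {y1, y2} = {} \<and>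
     \<not> module.dependent sc (range x \<union> {y1, y2}) \<and> module.span sc (range x \<union> {y1, y2}) = UNIV"

definition hcat :: "complex^'n^'m \<Rightarrow> complex^'n^'m \<Rightarrow> complex^('n + 'n)^'m" where
  "hcat A B = (\<chi> i j. case j of Inl k \<Rightarrow> A $ i $ k | Inr k \<Rightarrow> B $ i $ k)"

end

theory Submission
  imports Defs
begin

(* Suppose N is the direct sum of nonzero ideals J and K. As [N,N] is central, each of J and K
   meets the centre Z = span {y1, y2}, and since J and K intersect trivially, the central
   elements of J and of K lie on two distinct lines, spanned by u = a y1 + b y2 and
   w = c y1 + d y2 with ad - bc <> 0.  Split x_m = j_m + k_m and let column m of P hold the
   X-coordinates of j_m.  The bracket [x_i, j_m] lies in J and is central with coordinates
   ((AP)_im, (BP)_im), so the pencil aB - bA annihilates P; likewise dA - cB annihilates I - P.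
   The left kernels of P and I - P meet only in 0, hence rank (dA - cB) + rank (aB - bA) <= q,
   contradicting the hypothesis for C = [[d, -c], [-b, a]]. *)

definition matrix_pencil :: "'a::semiring_1 \<Rightarrow> 'a \<Rightarrow> 'a^'n^'m \<Rightarrow> 'a^'n^'m \<Rightarrow> 'a^'n^'m" where
  "matrix_pencil s t A B = (\<chi> i j. s * A $ i $ j + t * B $ i $ j)"

lemma matrix_pencil_component [simp]: "matrix_pencil s t A B $ i $ j = s * A $ i $ j + t * B $ i $ j"
  by (simp add: matrix_pencil_def)

lemma matrix_pencil_mult:
  fixes A B :: "'a::comm_semiring_1^'n^'m"
  shows "matrix_pencil s t A B ** P = matrix_pencil s t (A ** P) (B ** P)"
  by (simp add: vec_eq_iff matrix_matrix_mult_def sum_distrib_left sum.distrib algebra_simps)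

lemma rank_le_dim_left_kernel:
  fixes M :: "'a::field^'n^'m" and P :: "'a^'k^'n"
  assumes "M ** P = 0"
  shows "rank M \<le> vec.dim {v. v v* P = 0}"
proof -
  have "row i M v* P = row i (M ** P)" for i
    by (simp add: vec_eq_iff row_def vector_matrix_mult_def matrix_matrix_mult_def mult.commute)
  moreover have "row i (0 :: 'a^'k^'m) = 0" for i
    by (simp add: vec_eq_iff row_def)
  ultimately have "rows M \<subseteq> {v. v v* P = 0}"
    using assms by (auto simp: rows_def)
  then show ?thesis
    unfolding row_rank_def_gen by (rule vec.dim_subset)
qed

lemma subspace_left_kernel: "vec.subspace {v. v v* (P :: 'a::field^'k^'n) = 0}"
  by (auto simp: vec.subspace_def vector_matrix_left_distrib scalar_vector_matrix_assoc)

lemma rank_add_rank_le_of_mult_eq_0: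
  fixes M :: "'a::field^'n^'m" and N :: "'a^'n^'p" and P Q :: "'a^'n^'n"
  assumes "M ** Q = 0" and "N ** P = 0" and "P + Q = mat 1"
  shows "rank M + rank N \<le> CARD('n)"
proof -
  let ?KP = "{v. v v* P = 0}" and ?KQ = "{v. v v* Q = 0}"
  have "?KP \<inter> ?KQ = {0}"
  proof safe
    fix v :: "'a^'n" assume "v v* P = 0" "v v* Q = 0"
    then have "v v* (P + Q) = 0" by (simp add: vector_matrix_mult_add_rdistrib)
    then show "v = 0" by (simp add: assms(3))
  qed auto
  then have "vec.dim ?KQ + vec.dim ?KP = vec.dim {a + b |a b. a \<in> ?KQ \<and> b \<in> ?KP}"
    using vec.dim_sums_Int[OF subspace_left_kernel subspace_left_kernel, of Q P] by (simp add: Int_commute)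
  also have "\<dots> \<le> CARD('n)"
    by (rule dim_subset_UNIV_cart_gen)
  finally show ?thesis
    using rank_le_dim_left_kernel[OF assms(1)] rank_le_dim_left_kernel[OF assms(2)] by linarith
qed

context vector_space
begin

lemma span_pairE:
  assumes "v \<in> span {a, b}"
  obtains p q where "v = scale p a + scale q b"
proof -
  from assms obtain p where "v - scale p a \<in> span {b}"
    by (auto simp: span_breakdown_eq)
  then obtain q where "v - scale p a = scale q b"
    by (auto simp: span_singleton)
  then show thesis
    by (intro that[of p q]) (simp add: algebra_simps)
qed

lemma span_range_finite:
  fixes x :: "'n::finite \<Rightarrow> 'b"
  shows "span (range x) = range (\<lambda>c. \<Sum>r\<in>UNIV. scale (c r) (x r))"
proof
  have "subspace (range (\<lambda>c. \<Sum>r\<in>UNIV. scale (c r) (x r)))"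
    unfolding subspace_def
  proof safe
    show "0 \<in> range (\<lambda>c. \<Sum>r\<in>UNIV. scale (c r) (x r))"
      by (rule image_eqI[of _ _ "\<lambda>_. 0"]) auto
  next
    fix c d
    show "(\<Sum>r\<in>UNIV. scale (c r) (x r)) + (\<Sum>r\<in>UNIV. scale (d r) (x r))
        \<in> range (\<lambda>c. \<Sum>r\<in>UNIV. scale (c r) (x r))"
      by (rule image_eqI[of _ _ "\<lambda>r. c r + d r"]) (simp_all add: scale_left_distrib sum.distrib)
  next
    fix t c
    show "scale t (\<Sum>r\<in>UNIV. scale (c r) (x r)) \<in> range (\<lambda>c. \<Sum>r\<in>UNIV. scale (c r) (x r))"
      by (rule image_eqI[of _ _ "\<lambda>r. t * c r"]) (simp_all add: scale_sum_right)
  qed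
  moreover have "x i \<in> range (\<lambda>c. \<Sum>r\<in>UNIV. scale (c r) (x r))" for i
  proof
    show "x i = (\<Sum>r\<in>UNIV. scale (if r = i then 1 else 0) (x r))"
      by (simp add: if_distrib[of "\<lambda>c. scale c _"] cong: if_cong)
  qed simp
  ultimately show "span (range x) \<subseteq> range (\<lambda>c. \<Sum>r\<in>UNIV. scale (c r) (x r))"
    by (metis image_subsetI span_minimal)
  show "range (\<lambda>c. \<Sum>r\<in>UNIV. scale (c r) (x r)) \<subseteq> span (range x)"
    by (auto intro: span_sum span_scale span_base)
qed

lemma adjugate_combinations:
  "scale d (scale a y1 + scale b y2) - scale b (scale c y1 + scale d y2) = scale (a * d - b * c) y1"
  "scale a (scale c y1 + scale d y2) - scale c (scale a y1 + scale b y2) = scale (a * d - b * c) y2"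
  by (simp_all add: scale_right_distrib scale_left_diff_distrib algebra_simps)

lemma det_eq_0_if_span_not_subset:
  assumes "subspace S" "scale a y1 + scale b y2 \<in> S" "scale c y1 + scale d y2 \<in> S"
    and "\<not> span {y1, y2} \<subseteq> S"
  shows "a * d - b * c = 0"
proof (rule ccontr)
  assume det: "a * d - b * c \<noteq> 0"
  have "y \<in> S" if "scale (a * d - b * c) y \<in> S" for y
    using subspace_scale[OF assms(1) that, of "inverse (a * d - b * c)"] det by (simp add: scale_scale)
  moreover have "scale (a * d - b * c) y1 \<in> S" "scale (a * d - b * c) y2 \<in> S"
    unfolding adjugate_combinations(1)[of d a y1 b y2 c, symmetric]
      adjugate_combinations(2)[of a c y1 d y2 b, symmetric]
    using assms(1-3) by (auto intro: subspace_diff subspace_scale)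
  ultimately have "{y1, y2} \<subseteq> S"
    by blast
  then show False
    using assms(1,4) span_minimal by blast
qed

lemma det_ne_0_if_in_disjoint_subspaces:
  assumes "subspace S" "subspace T" "S \<inter> T = {0}"
    and u: "u = scale a y1 + scale b y2" "u \<in> S" "u \<noteq> 0"
    and w: "w = scale c y1 + scale d y2" "w \<in> T" "w \<noteq> 0"
  shows "a * d - b * c \<noteq> 0"
proof
  assume det: "a * d - b * c = 0"
  have "scale s u = scale t w \<Longrightarrow> s = 0 \<and> t = 0" for s t
  proof -
    assume eq: "scale s u = scale t w"
    then have "scale s u \<in> S \<inter> T"
      using assms(1,2) u(2) w(2) by (metis IntI subspace_scale)
    then show ?thesis
      using assms(3) eq u(3) w(3) by auto
  qed
  moreover have "scale d u - scale b w = 0" "scale a w - scale c u = 0"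
    unfolding u(1) w(1) adjugate_combinations using det by simp_all
  ultimately have "a = 0" "b = 0"
    by (metis right_minus_eq)+
  then show False
    using u by simp
qed

end

locale lie_bracket = vector_space sc
  for sc :: "complex \<Rightarrow> 'a::ab_group_add \<Rightarrow> 'a" +
  fixes br :: "'a \<Rightarrow> 'a \<Rightarrow> 'a"
  assumes linear_br: "Vector_Spaces.linear sc sc (br a)"
    and linear_br_left: "Vector_Spaces.linear sc sc (\<lambda>a. br a b)"
    and br_self [simp]: "br a a = 0"
begin

lemma module_hom_br: "module_hom sc sc (br a)"
  using linear_br by (simp add: module_hom_iff_linear)

lemma module_hom_br_left: "module_hom sc sc (\<lambda>a. br a b)"
  using linear_br_left by (simp add: module_hom_iff_linear)

lemmas br_add = module_hom.add[OF module_hom_br]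
  and br_scale = module_hom.scale[OF module_hom_br]
  and br_sum = module_hom.sum[OF module_hom_br]
  and br_add_left = module_hom.add[OF module_hom_br_left]

lemma br_antisym: "br b a = - br a b"
proof -
  have "0 = br (a + b) (a + b)"
    by simp
  also have "\<dots> = (br a a + br b a) + (br a b + br b b)"
    by (simp only: br_add br_add_left)
  also have "\<dots> = br a b + br b a"
    by simp
  finally show ?thesis
    by (metis add.commute eq_neg_iff_add_eq_0)
qed

lemma br_center: "z \<in> lie_center br \<Longrightarrow> br a z = 0"
  by (simp add: lie_center_def br_antisym[of a z])

lemma lie_ideal_br_right: "lie_ideal sc br J \<Longrightarrow> a \<in> J \<Longrightarrow> br b a \<in> J"
  unfolding lie_ideal_def by blast

lemma lie_ideal_br_left: "lie_ideal sc br J \<Longrightarrow> a \<in> J \<Longrightarrow> br a b \<in> J"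
  unfolding lie_ideal_def by (metis br_antisym subspace_neg)

lemma lie_ideal_meets_center:
  assumes derived_central: "\<And>a b. br a b \<in> lie_center br"
    and J: "lie_ideal sc br J" "J \<noteq> {0}"
  obtains u where "u \<in> J" "u \<in> lie_center br" "u \<noteq> 0"
proof -
  obtain j where j: "j \<in> J" "j \<noteq> 0"
    using J subspace_0 unfolding lie_ideal_def by blast
  show thesis
  proof (cases "j \<in> lie_center br")
    case True
    with j that show thesis by blast
  next
    case False
    then obtain b where "br j b \<noteq> 0"
      by (auto simp: lie_center_def)
    with that lie_ideal_br_left[OF J(1) j(1)] derived_central show thesis by blast
  qed
qed

lemma br_coords:
  fixes x :: "'n::finite \<Rightarrow> 'a" and A B :: "complex^'n^'n"
  assumes tensor: "\<And>i j. br (x i) (x j) = sc (A $ i $ j) y1 + sc (B $ i $ j) y2"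
    and z: "z \<in> lie_center br"
  shows "br (x i) ((\<Sum>r\<in>UNIV. sc (c $ r) (x r)) + z) = sc ((A *v c) $ i) y1 + sc ((B *v c) $ i) y2"
proof -
  have "br (x i) ((\<Sum>r\<in>UNIV. sc (c $ r) (x r)) + z) = (\<Sum>r\<in>UNIV. sc (c $ r) (br (x i) (x r)))"
    by (simp add: br_add br_sum br_scale br_center[OF z])
  also have "\<dots> = (\<Sum>r\<in>UNIV. sc (A $ i $ r * c $ r) y1 + sc (B $ i $ r * c $ r) y2)"
    by (simp add: tensor scale_right_distrib scale_scale mult.commute)
  also have "\<dots> = sc ((A *v c) $ i) y1 + sc ((B *v c) $ i) y2"
    by (simp add: matrix_vector_mult_def sum.distrib scale_sum_left)
  finally show ?thesis .
qed

(* (a, b) and (c, d) are the coordinates of nonzero central elements of J and of K. *)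
lemma direct_sum_center_lines:
  assumes derived_central: "\<And>a b. br a b \<in> lie_center br"
    and center: "span {y1, y2} = lie_center br"
    and J: "lie_ideal sc br J" "J \<noteq> {0}" and K: "lie_ideal sc br K" "K \<noteq> {0}"
    and disjoint: "J \<inter> K = {0}"
  obtains a b c d where "a * d - b * c \<noteq> 0"
    and "\<And>p q. sc p y1 + sc q y2 \<in> J \<Longrightarrow> a * q - b * p = 0"
    and "\<And>p q. sc p y1 + sc q y2 \<in> K \<Longrightarrow> c * q - d * p = 0"
proof -
  have subspaces: "subspace J" "subspace K"
    using J K by (simp_all add: lie_ideal_def)
  obtain u where u: "u \<in> J" "u \<in> span {y1, y2}" "u \<noteq> 0"
    using lie_ideal_meets_center[OF derived_central J] center by metis
  obtain w where w: "w \<in> K" "w \<in> span {y1, y2}" "w \<noteq> 0"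
    using lie_ideal_meets_center[OF derived_central K] center by metis
  obtain a b where ab: "u = sc a y1 + sc b y2"
    using u(2) by (rule span_pairE)
  obtain c d where cd: "w = sc c y1 + sc d y2"
    using w(2) by (rule span_pairE)
  have not_J: "\<not> span {y1, y2} \<subseteq> J" and not_K: "\<not> span {y1, y2} \<subseteq> K"
    using u w disjoint by blast+
  show thesis
  proof (rule that)
    show "a * d - b * c \<noteq> 0"
      by (rule det_ne_0_if_in_disjoint_subspaces[OF subspaces disjoint ab u(1,3) cd w(1,3)])
    show "a * q - b * p = 0" if "sc p y1 + sc q y2 \<in> J" for p q
      by (rule det_eq_0_if_span_not_subset[OF subspaces(1) u(1)[unfolded ab] that not_J])
    show "c * q - d * p = 0" if "sc p y1 + sc q y2 \<in> K" for p q
      by (rule det_eq_0_if_span_not_subset[OF subspaces(2) w(1)[unfolded cd] that not_K])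
  qed
qed

(* Column m of P holds the coordinates along x of the J-component of x m. *)
lemma lie_ideal_sum_bracket_coords:
  fixes x :: "'n::finite \<Rightarrow> 'a" and A B :: "complex^'n^'n"
  assumes spanning: "span (range x \<union> {y1, y2}) = UNIV"
    and central: "span {y1, y2} \<subseteq> lie_center br"
    and tensor: "\<And>i j. br (x i) (x j) = sc (A $ i $ j) y1 + sc (B $ i $ j) y2"
    and J: "lie_ideal sc br J" and K: "lie_ideal sc br K"
    and JK: "{j + k |j k. j \<in> J \<and> k \<in> K} = UNIV"
  obtains P :: "complex^'n^'n"
  where "\<And>i m. sc ((A ** P) $ i $ m) y1 + sc ((B ** P) $ i $ m) y2 \<in> J"
    and "\<And>i m. sc ((A ** (mat 1 - P)) $ i $ m) y1 + sc ((B ** (mat 1 - P)) $ i $ m) y2 \<in> K"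
proof -
  have "\<exists>j k c. j \<in> J \<and> k \<in> K \<and> x m = j + k \<and> j - (\<Sum>r\<in>UNIV. sc (c $ r) (x r)) \<in> span {y1, y2}"
    for m
  proof -
    obtain j k where jk: "j \<in> J" "k \<in> K" "x m = j + k"
      using JK by blast
    have "j \<in> span (range x \<union> {y1, y2})"
      using spanning by simp
    then obtain c z where "j = (\<Sum>r\<in>UNIV. sc (c r) (x r)) + z" "z \<in> span {y1, y2}"
      unfolding span_Un span_range_finite by blast
    with jk show ?thesis
      by (intro exI[of _ j] exI[of _ k] exI[of _ "vec_lambda c"]) simp
  qed
  then obtain j k c where jkc: "\<And>m. j m \<in> J" "\<And>m. k m \<in> K" "\<And>m. x m = j m + k m"
    "\<And>m. j m - (\<Sum>r\<in>UNIV. sc (c m $ r) (x r)) \<in> span {y1, y2}"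
    by metis
  define P where "P = (\<chi> r m. c m $ r)"
  have brJ: "br (x i) (j m) = sc ((A ** P) $ i $ m) y1 + sc ((B ** P) $ i $ m) y2" for i m
  proof -
    have "(A ** P) $ i $ m = (A *v c m) $ i" "(B ** P) $ i $ m = (B *v c m) $ i"
      by (simp_all add: P_def matrix_matrix_mult_def matrix_vector_mult_def)
    moreover have "j m = (\<Sum>r\<in>UNIV. sc (c m $ r) (x r)) + (j m - (\<Sum>r\<in>UNIV. sc (c m $ r) (x r)))"
      by simp
    ultimately show ?thesis
      using br_coords[OF tensor] central jkc(4)[of m] by (metis subsetD)
  qed
  have complement: "M ** (mat 1 - P) = M - M ** P" for M :: "complex^'n^'n"
    using matrix_add_ldistrib[of M "mat 1 - P" P] by (simp add: eq_diff_eq)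
  have brK: "br (x i) (k m) = sc ((A ** (mat 1 - P)) $ i $ m) y1 + sc ((B ** (mat 1 - P)) $ i $ m) y2"
    for i m
  proof -
    have "br (x i) (k m) = br (x i) (x m) - br (x i) (j m)"
      by (simp add: jkc(3)[of m] br_add)
    then show ?thesis
      by (simp add: brJ tensor complement scale_left_diff_distrib)
  qed
  show thesis
    by (rule that[of P]) (metis brJ brK jkc(1,2) lie_ideal_br_right J K)+
qed

lemma direct_sum_low_rank_pencil:
  fixes x :: "'n::finite \<Rightarrow> 'a" and A B :: "complex^'n^'n"
  assumes derived_central: "\<And>a b. br a b \<in> lie_center br"
    and center: "span {y1, y2} = lie_center br"
    and spanning: "span (range x \<union> {y1, y2}) = UNIV"
    and tensor: "\<And>i j. br (x i) (x j) = sc (A $ i $ j) y1 + sc (B $ i $ j) y2"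
    and J: "lie_ideal sc br J" "J \<noteq> {0}" and K: "lie_ideal sc br K" "K \<noteq> {0}"
    and disjoint: "J \<inter> K = {0}" and JK: "{j + k |j k. j \<in> J \<and> k \<in> K} = UNIV"
  obtains c11 c12 c21 c22 where "c11 * c22 - c12 * c21 \<noteq> 0"
    and "rank (matrix_pencil c11 c12 A B) + rank (matrix_pencil c21 c22 A B) \<le> CARD('n)"
proof -
  obtain a b c d where det: "a * d - b * c \<noteq> 0"
    and line_J: "\<And>p q. sc p y1 + sc q y2 \<in> J \<Longrightarrow> a * q - b * p = 0"
    and line_K: "\<And>p q. sc p y1 + sc q y2 \<in> K \<Longrightarrow> c * q - d * p = 0"
    by (rule direct_sum_center_lines[OF derived_central center J K disjoint]) (rule that)
  obtain P where
    PJ: "\<And>i m. sc ((A ** P) $ i $ m) y1 + sc ((B ** P) $ i $ m) y2 \<in> J" and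
    PK: "\<And>i m. sc ((A ** (mat 1 - P)) $ i $ m) y1 + sc ((B ** (mat 1 - P)) $ i $ m) y2 \<in> K"
    using lie_ideal_sum_bracket_coords[OF spanning _ tensor J(1) K(1) JK] center by blast
  have "matrix_pencil (- b) a A B ** P = 0" "matrix_pencil d (- c) A B ** (mat 1 - P) = 0"
    using line_J[OF PJ] line_K[OF PK]
    by (simp_all add: vec_eq_iff matrix_pencil_mult algebra_simps)
  then have "rank (matrix_pencil d (- c) A B) + rank (matrix_pencil (- b) a A B) \<le> CARD('n)"
    by (intro rank_add_rank_le_of_mult_eq_0) auto
  moreover have "d * a - (- c) * (- b) \<noteq> 0"
    using det by (simp add: algebra_simps)
  ultimately show thesis
    using that by blast
qed

end

lemma lie_bracket_if_lie_algebra: "lie_algebra sc br \<Longrightarrow> lie_bracket sc br"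
  unfolding lie_algebra_def lie_bracket_def lie_bracket_axioms_def by blast

theorem lemma7:
  fixes sc :: "complex \<Rightarrow> 'a::ab_group_add \<Rightarrow> 'a"
    and br :: "'a \<Rightarrow> 'a \<Rightarrow> 'a"
    and x :: "'n::finite \<Rightarrow> 'a" and y1 y2 :: 'a
    and A B :: "complex^'n^'n"
  assumes lie: "lie_algebra sc br"
    and fin: "fin_dim_space sc"
    and nil: "two_step_nilpotent br"
    and cdim: "vector_space.dim sc (lie_center br) = 2"
    and qdef: "CARD('n) = vector_space.dim sc (UNIV :: 'a set) - 2"
    and basis: "adapted_basis sc br x y1 y2"
    and tensor: "\<And>i j. br (x i) (x j) = sc (A $ i $ j) y1 + sc (B $ i $ j) y2"
    and marg: "rank (hcat A B) = CARD('n)"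
    and hyp: "\<And>c11 c12 c21 c22 :: complex. c11 * c22 - c12 * c21 \<noteq> 0 \<Longrightarrow>
              rank (\<chi> i j. c11 * A $ i $ j + c12 * B $ i $ j)
            + rank (\<chi> i j. c21 * A $ i $ j + c22 * B $ i $ j) > CARD('n)"
  shows "lie_indecomposable sc br"
proof -
  interpret lie_bracket sc br
    using lie by (rule lie_bracket_if_lie_algebra)
  have center: "span {y1, y2} = lie_center br" and spanning: "span (range x \<union> {y1, y2}) = UNIV"
    using basis by (simp_all add: adapted_basis_def)
  have derived_central: "br a b \<in> lie_center br" for a b
    using nil by (simp add: two_step_nilpotent_def lie_center_def)
  show ?thesis
    unfolding lie_indecomposable_def
  proof clarify
    fix J K
    assume "lie_ideal sc br J" "J \<noteq> {0}" "lie_ideal sc br K" "K \<noteq> {0}"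
      and "J \<inter> K = {0}" and "{j + k |j k. j \<in> J \<and> k \<in> K} = UNIV"
    then obtain c11 c12 c21 c22 where "c11 * c22 - c12 * c21 \<noteq> 0"
      and "rank (matrix_pencil c11 c12 A B) + rank (matrix_pencil c21 c22 A B) \<le> CARD('n)"
      by (rule direct_sum_low_rank_pencil[OF derived_central center spanning tensor])
    with hyp show False
      by (fastforce simp: matrix_pencil_def)
  qed
qed

end
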